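(* Let $\mathbf H$ be a random $N_r\times N_t$ complex matrix with i.i.d. entries. Then for every $\mathrm{snr}>0$, $$I^{\rm mmse}(\mathrm{snr},N_r,N_t)=N_t\Big(I^{\rm opt}(\mathrm{snr},N_r,N_t)-I^{\rm opt}\Big(\tfrac{N_t-1}{N_t}\mathrm{snr},N_r,N_t-1\Big)\Big),$$ where $I^{\rm opt}(\mathrm{snr},N_r,N)=E\big[\log_2\det(\mathbf I_{N_r}+\frac{\mathrm{snr}}{N}\mathbf G\mathbf G^\dagger)\big]$ for a random $N_r\times N$ matrix $\mathbf G$ with i.i.d. entries having the same distribution as those of $\mathbf H$.
   Context: The channel $\mathbf H$ is normalized so that $E[\mathrm{tr}(\mathbf H\mathbf H^\dagger)]=N_rN_t$. The MMSE output SINR of stream $i$ is $\gamma_i=1/\big[(\mathbf I_{N_t}+\frac{\mathrm{snr}}{N_t}\mathbf H^\dagger\mathbf H)^{-1}\big]_{i,i}-1$, and the MMSE achievable sum rate is $I^{\rm mmse}(\mathrm{snr},N_r,N_t)=\sum_{i=1}^{N_t}E[\log_2(1+\gamma_i)]$. *)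

theory Defs
  imports "HOL-Probability.Probability"
    "Jordan_Normal_Form.Determinant"
    "Jordan_Normal_Form.Gauss_Jordan_Elimination"
begin

definition herm :: "complex mat \<Rightarrow> complex mat" where
  "herm A = transpose_mat (map_mat cnj A)"

definition rand_mat_space :: "complex measure \<Rightarrow> nat \<Rightarrow> nat \<Rightarrow> ((nat \<times> nat) \<Rightarrow> complex) measure" where
  "rand_mat_space D m n = PiM ({0..<m} \<times> {0..<n}) (\<lambda>_. D)"

definition to_mat :: "nat \<Rightarrow> nat \<Rightarrow> ((nat \<times> nat) \<Rightarrow> complex) \<Rightarrow> complex mat" where
  "to_mat m n \<omega> = mat m n \<omega>"

text \<open>Optimal (capacity) sum rate:
  E[log2 det(I_Nr + snr/N G G^H)], G an Nr x N random matrix with i.i.d. entries of law D.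
  The determinant is real (and positive), we take its real part.\<close>
definition I_opt :: "complex measure \<Rightarrow> real \<Rightarrow> nat \<Rightarrow> nat \<Rightarrow> real" where
  "I_opt D snr Nr N =
     (\<integral>\<omega>. log 2 (Re (det (1\<^sub>m Nr + complex_of_real (snr / real N) \<cdot>\<^sub>m
         (to_mat Nr N \<omega> * herm (to_mat Nr N \<omega>))))) \<partial>(rand_mat_space D Nr N))"

definition sinr_mmse :: "real \<Rightarrow> nat \<Rightarrow> nat \<Rightarrow> complex mat \<Rightarrow> nat \<Rightarrow> real" where
  "sinr_mmse snr Nr Nt H i =
     1 / Re ((the (mat_inverse (1\<^sub>m Nt + complex_of_real (snr / real Nt) \<cdot>\<^sub>m (herm H * H)))) $$ (i, i)) - 1"

definition I_mmse :: "complex measure \<Rightarrow> real \<Rightarrow> nat \<Rightarrow> nat \<Rightarrow> real" where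
  "I_mmse D snr Nr Nt =
     (\<Sum>i<Nt. \<integral>\<omega>. log 2 (1 + sinr_mmse snr Nr Nt (to_mat Nr Nt \<omega>) i) \<partial>(rand_mat_space D Nr Nt))"

end

theory Submission
  imports Defs
begin

text \<open>
  Write \<open>c = snr / N\<^sub>t\<close> and \<open>G = I + c H\<^sup>\<dagger>H\<close>. The cofactor formula gives
  \<open>[G\<^sup>-\<^sup>1]\<^sub>i\<^sub>i = det G\<^sub>-\<^sub>i / det G\<close>, where \<open>G\<^sub>-\<^sub>i\<close> is the same matrix built from \<open>H\<close> with
  column \<open>i\<close> deleted; positive definiteness makes both determinants real and at least 1.
  Sylvester's identity \<open>det (I + XY) = det (I + YX)\<close> turns \<open>det G\<close> into \<open>det (I + c HH\<^sup>\<dagger>)\<close>,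
  so pointwise \<open>log (1 + \<gamma>\<^sub>i) = log det (I + c HH\<^sup>\<dagger>) - log det (I + c H\<^sub>-\<^sub>iH\<^sub>-\<^sub>i\<^sup>\<dagger>)\<close>.
  Deleting a column of an i.i.d. matrix leaves an i.i.d. \<open>N\<^sub>r \<times> (N\<^sub>t - 1)\<close> matrix, and
  \<open>c = ((N\<^sub>t - 1) / N\<^sub>t \<cdot> snr) / (N\<^sub>t - 1)\<close>, so the second term has expectation
  \<open>I\<^sup>o\<^sup>p\<^sup>t\<close> at the reduced SNR. Both terms are integrable since \<open>log det (I + c HH\<^sup>\<dagger>)\<close>
  grows at most linearly in the squared entries; summing over the \<open>N\<^sub>t\<close> streams gives the claim.
\<close>

no_notation vec_nth (infixl "$" 90)

section \<open>Hermitian forms and the loaded Gram matrix\<close>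

lemma herm_carrier_mat [simp]: "H \<in> carrier_mat m n \<Longrightarrow> herm H \<in> carrier_mat n m"
  unfolding herm_def by auto

lemma herm_dims [simp]: "dim_row (herm H) = dim_col H" "dim_col (herm H) = dim_row H"
  unfolding herm_def by auto

lemma herm_index [simp]:
  "i < dim_col H \<Longrightarrow> j < dim_row H \<Longrightarrow> herm H $$ (i, j) = cnj (H $$ (j, i))"
  unfolding herm_def by auto

lemma herm_mult_vec_cscalar_prod:
  assumes H: "H \<in> carrier_mat m n" and z: "z \<in> carrier_vec m" and y: "y \<in> carrier_vec n"
  shows "(herm H *\<^sub>v z) \<bullet>c y = z \<bullet>c (H *\<^sub>v y)"
proof -
  have "(herm H *\<^sub>v z) \<bullet>c y = (\<Sum>k=0..<n. \<Sum>r=0..<m. cnj (H $$ (r, k)) * z $ r * cnj (y $ k))"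
    using H z y by (simp add: scalar_prod_def sum_distrib_right mult.assoc)
  also have "\<dots> = (\<Sum>r=0..<m. \<Sum>k=0..<n. cnj (H $$ (r, k)) * z $ r * cnj (y $ k))"
    by (rule sum.swap)
  also have "\<dots> = z \<bullet>c (H *\<^sub>v y)"
    using H z y by (simp add: scalar_prod_def sum_distrib_left ac_simps)
  finally show ?thesis .
qed

definition cnorm_sq :: "complex vec \<Rightarrow> real" where
  "cnorm_sq v = (\<Sum>k=0..<dim_vec v. (cmod (v $ k))\<^sup>2)"

lemma cscalar_prod_self: "v \<bullet>c v = complex_of_real (cnorm_sq v)"
  unfolding cnorm_sq_def scalar_prod_def of_real_sum
  by (rule sum.cong) (auto simp flip: of_real_power simp: complex_norm_square)

lemma cnorm_sq_nonneg: "cnorm_sq v \<ge> 0"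
  unfolding cnorm_sq_def by (intro sum_nonneg) simp

lemma cnorm_sq_eq_0_iff: "v \<in> carrier_vec n \<Longrightarrow> cnorm_sq v = 0 \<longleftrightarrow> v = 0\<^sub>v n"
  using conjugate_square_eq_0_vec[of v n] by (simp add: cscalar_prod_self)

lemma cmod_sq_le_cnorm_sq: "i < dim_vec v \<Longrightarrow> (cmod (v $ i))\<^sup>2 \<le> cnorm_sq v"
  unfolding cnorm_sq_def by (rule member_le_sum) auto

lemma smult_mult_mat_vec:
  "A \<in> carrier_mat nr nc \<Longrightarrow> v \<in> carrier_vec nc \<Longrightarrow> (k \<cdot>\<^sub>m A) *\<^sub>v v = k \<cdot>\<^sub>v (A *\<^sub>v v)"
  by (intro eq_vecI) (auto simp: scalar_prod_def sum_distrib_left ac_simps)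

definition loaded_gram :: "real \<Rightarrow> nat \<Rightarrow> complex mat \<Rightarrow> complex mat" where
  "loaded_gram c n H = 1\<^sub>m n + complex_of_real c \<cdot>\<^sub>m (herm H * H)"

lemma loaded_gram_carrier [simp]: "H \<in> carrier_mat m n \<Longrightarrow> loaded_gram c n H \<in> carrier_mat n n"
  unfolding loaded_gram_def by auto

lemma loaded_gram_index:
  assumes "H \<in> carrier_mat m n" "i < n" "j < n"
  shows "loaded_gram c n H $$ (i, j) =
    (if i = j then 1 else 0) + of_real c * (\<Sum>r=0..<m. cnj (H $$ (r, i)) * H $$ (r, j))"
  using assms unfolding loaded_gram_def by (auto simp: scalar_prod_def)

lemma loaded_gram_quadratic_form:
  assumes H: "H \<in> carrier_mat m n" and y: "y \<in> carrier_vec n"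
  shows "(loaded_gram c n H *\<^sub>v y) \<bullet>c y = complex_of_real (cnorm_sq y + c * cnorm_sq (H *\<^sub>v y))"
proof -
  have Hy: "H *\<^sub>v y \<in> carrier_vec m" using H y by simp
  have "loaded_gram c n H *\<^sub>v y = 1\<^sub>m n *\<^sub>v y + (complex_of_real c \<cdot>\<^sub>m (herm H * H)) *\<^sub>v y"
    unfolding loaded_gram_def using H y by (intro add_mult_distrib_mat_vec) auto
  also have "\<dots> = y + complex_of_real c \<cdot>\<^sub>v (herm H *\<^sub>v (H *\<^sub>v y))"
  proof -
    have hH: "herm H \<in> carrier_mat n m" using H by simp
    have "(complex_of_real c \<cdot>\<^sub>m (herm H * H)) *\<^sub>v y = complex_of_real c \<cdot>\<^sub>v (herm H *\<^sub>v (H *\<^sub>v y))"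
      using smult_mult_mat_vec[OF mult_carrier_mat[OF hH H] y] assoc_mult_mat_vec[OF hH H y] by simp
    then show ?thesis using y by simp
  qed
  finally have "loaded_gram c n H *\<^sub>v y = y + complex_of_real c \<cdot>\<^sub>v (herm H *\<^sub>v (H *\<^sub>v y))" .
  moreover have "herm H *\<^sub>v (H *\<^sub>v y) \<in> carrier_vec n"
    using herm_carrier_mat[OF H] Hy by (rule mult_mat_vec_carrier)
  moreover have "conjugate y \<in> carrier_vec n" using y by simp
  ultimately have "(loaded_gram c n H *\<^sub>v y) \<bullet>c y
      = y \<bullet>c y + complex_of_real c * ((herm H *\<^sub>v (H *\<^sub>v y)) \<bullet>c y)"
    using y by (simp add: add_scalar_prod_distrib[of _ n])
  also have "(herm H *\<^sub>v (H *\<^sub>v y)) \<bullet>c y = (H *\<^sub>v y) \<bullet>c (H *\<^sub>v y)"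
    using H Hy y by (rule herm_mult_vec_cscalar_prod)
  finally have "(loaded_gram c n H *\<^sub>v y) \<bullet>c y = y \<bullet>c y + complex_of_real c * ((H *\<^sub>v y) \<bullet>c (H *\<^sub>v y))" .
  then show ?thesis by (simp add: cscalar_prod_self)
qed

lemma loaded_gram_mult_vec_eq_0_imp_eq_0:
  assumes H: "H \<in> carrier_mat m n" and c: "c \<ge> 0" and y: "y \<in> carrier_vec n"
    and Gy: "loaded_gram c n H *\<^sub>v y = 0\<^sub>v n"
  shows "y = 0\<^sub>v n"
proof -
  have "complex_of_real (cnorm_sq y + c * cnorm_sq (H *\<^sub>v y)) = 0"
    using loaded_gram_quadratic_form[OF H y, of c] Gy y by simp
  then have "cnorm_sq y + c * cnorm_sq (H *\<^sub>v y) = 0" by (simp only: of_real_eq_0_iff)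
  then have "cnorm_sq y = 0"
    using c cnorm_sq_nonneg[of y] cnorm_sq_nonneg[of "H *\<^sub>v y"] by (simp add: add_nonneg_eq_0_iff)
  then show ?thesis using cnorm_sq_eq_0_iff[OF y] by blast
qed

lemma det_loaded_gram_nonzero:
  assumes "H \<in> carrier_mat m n" and "c \<ge> 0"
  shows "det (loaded_gram c n H) \<noteq> 0"
  using det_0_iff_vec_prod_zero[OF loaded_gram_carrier[OF assms(1)]]
    loaded_gram_mult_vec_eq_0_imp_eq_0[OF assms] by blast

lemma loaded_gram_inverse:
  assumes H: "H \<in> carrier_mat m n" and c: "c \<ge> 0"
  obtains B where "mat_inverse (loaded_gram c n H) = Some B" "B \<in> carrier_mat n n"
    "loaded_gram c n H * B = 1\<^sub>m n" "B * loaded_gram c n H = 1\<^sub>m n"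
proof -
  have G: "loaded_gram c n H \<in> carrier_mat n n" using H by simp
  have "loaded_gram c n H \<in> Units (ring_mat TYPE(complex) n undefined)"
    by (rule det_non_zero_imp_unit[OF G det_loaded_gram_nonzero[OF H c]])
  then obtain B where "mat_inverse (loaded_gram c n H) = Some B"
    using mat_inverse(1)[OF G, where b = undefined] by (cases "mat_inverse (loaded_gram c n H)") auto
  with mat_inverse(2)[OF G this] that show ?thesis by blast
qed

lemma loaded_gram_inverse_diag:
  assumes H: "H \<in> carrier_mat m n" and c: "c \<ge> 0"
    and B: "B \<in> carrier_mat n n" "loaded_gram c n H * B = 1\<^sub>m n" and i: "i < n"
  shows "\<exists>q. B $$ (i, i) = complex_of_real q \<and> 0 < q \<and> q \<le> 1"
proof -
  define y where "y = col B i"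
  have y: "y \<in> carrier_vec n" using B i unfolding y_def by auto
  have Gy: "loaded_gram c n H *\<^sub>v y = unit_vec n i"
    using col_mult2[OF loaded_gram_carrier[OF H] B(1) i, of c] B(2) i unfolding y_def by simp
  define q where "q = cnorm_sq y + c * cnorm_sq (H *\<^sub>v y)"
  have "cnj (y $ i) = complex_of_real q"
    using loaded_gram_quadratic_form[OF H y, of c] Gy y i unfolding q_def by simp
  then have yi: "y $ i = complex_of_real q"
    by (metis complex_cnj_cnj complex_cnj_complex_of_real)
  have "y \<noteq> 0\<^sub>v n"
  proof
    assume "y = 0\<^sub>v n"
    moreover have "loaded_gram c n H *\<^sub>v 0\<^sub>v n = 0\<^sub>v n"
      using loaded_gram_carrier[OF H, of c] by (intro eq_vecI) auto
    ultimately have "unit_vec n i = (0\<^sub>v n :: complex vec)" using Gy by simp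
    then show False using i by (metis index_unit_vec(2) index_zero_vec(1) zero_neq_one)
  qed
  then have "0 < cnorm_sq y"
    using cnorm_sq_eq_0_iff[OF y] cnorm_sq_nonneg[of y] by linarith
  moreover have "cnorm_sq y \<le> q"
    using c cnorm_sq_nonneg[of "H *\<^sub>v y"] unfolding q_def by simp
  \<comment> \<open>\<open>q = y\<^sub>i\<close> lies between \<open>|y\<^sub>i|\<^sup>2\<close> and \<open>\<parallel>y\<parallel>\<^sup>2\<close>, hence \<open>q\<^sup>2 \<le> q\<close>\<close>
  moreover have "q * q \<le> cnorm_sq y"
    using cmod_sq_le_cnorm_sq[of i y] y i yi by (simp add: power2_eq_square)
  ultimately have "0 < q" "q * q \<le> q * 1" by linarith+
  then have "0 < q" "q \<le> 1" by (metis mult_le_cancel_left_pos)+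
  then show ?thesis using yi B i unfolding y_def by auto
qed

section \<open>Determinant identities\<close>

definition delete_col :: "'a mat \<Rightarrow> nat \<Rightarrow> 'a mat" where
  "delete_col H i = mat (dim_row H) (dim_col H - 1) (\<lambda>(r, k). H $$ (r, if k < i then k else Suc k))"

lemma delete_col_carrier: "H \<in> carrier_mat m n \<Longrightarrow> delete_col H i \<in> carrier_mat m (n - 1)"
  unfolding delete_col_def by auto

lemma mat_delete_loaded_gram:
  assumes H: "H \<in> carrier_mat m n" and i: "i < n"
  shows "mat_delete (loaded_gram c n H) i i = loaded_gram c (n - 1) (delete_col H i)"
proof (rule eq_matI)
  have H': "delete_col H i \<in> carrier_mat m (n - 1)" using delete_col_carrier[OF H] .
  have G: "loaded_gram c n H \<in> carrier_mat n n" using H by (rule loaded_gram_carrier)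
  have G': "loaded_gram c (n - 1) (delete_col H i) \<in> carrier_mat (n - 1) (n - 1)"
    using H' by (rule loaded_gram_carrier)
  show "dim_row (mat_delete (loaded_gram c n H) i i) = dim_row (loaded_gram c (n - 1) (delete_col H i))"
    "dim_col (mat_delete (loaded_gram c n H) i i) = dim_col (loaded_gram c (n - 1) (delete_col H i))"
    using G G' by auto
  fix a b assume "a < dim_row (loaded_gram c (n - 1) (delete_col H i))"
    "b < dim_col (loaded_gram c (n - 1) (delete_col H i))"
  then have ab: "a < n - 1" "b < n - 1" using G' by auto
  define s where "s k = (if k < i then k else Suc k)" for k
  have s: "s a < n" "s b < n" "s a = s b \<longleftrightarrow> a = b" using ab unfolding s_def by auto
  have "mat_delete (loaded_gram c n H) i i $$ (a, b) = loaded_gram c n H $$ (s a, s b)"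
    using ab G unfolding mat_delete_def s_def by auto
  also have "\<dots> = (if a = b then 1 else 0) + of_real c * (\<Sum>r=0..<m. cnj (H $$ (r, s a)) * H $$ (r, s b))"
    using loaded_gram_index[OF H s(1,2)] s(3) by simp
  also have "\<dots> = loaded_gram c (n - 1) (delete_col H i) $$ (a, b)"
    using loaded_gram_index[OF H' ab] H ab unfolding delete_col_def s_def by auto
  finally show "mat_delete (loaded_gram c n H) i i $$ (a, b) = loaded_gram c (n - 1) (delete_col H i) $$ (a, b)" .
qed

lemma det_mult_inverse_diag:
  fixes G :: "'a :: comm_ring_1 mat"
  assumes G: "G \<in> carrier_mat n n" and B: "B \<in> carrier_mat n n" "B * G = 1\<^sub>m n" and i: "i < n"
  shows "det G * B $$ (i, i) = det (mat_delete G i i)"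
proof -
  have A: "adj_mat G \<in> carrier_mat n n" using adj_mat(1)[OF G] .
  have "adj_mat G = (B * G) * adj_mat G" using B(2) A by simp
  also have "\<dots> = B * (G * adj_mat G)" by (rule assoc_mult_mat[OF B(1) G A])
  also have "\<dots> = det G \<cdot>\<^sub>m B"
    using adj_mat(2)[OF G] B(1) by (simp add: mult_smult_distrib[OF B(1) one_carrier_mat])
  finally have "adj_mat G $$ (i, i) = det G * B $$ (i, i)" using B i by simp
  moreover have "adj_mat G $$ (i, i) = det (mat_delete G i i)"
    using G i unfolding adj_mat_def cofactor_def by simp
  ultimately show ?thesis by simp
qed

lemma det_loaded_gram_ge_1:
  assumes "H \<in> carrier_mat m n" and c: "c \<ge> 0"
  shows "\<exists>q\<ge>1. det (loaded_gram c n H) = complex_of_real q"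
  using assms(1)
proof (induction n arbitrary: H)
  case 0
  then have "loaded_gram c 0 H = 1\<^sub>m 0"
    by (intro eq_matI) (auto dest: loaded_gram_carrier[of _ _ _ c])
  then show ?case by (intro exI[of _ 1]) simp
next
  case (Suc n)
  note H = Suc.prems
  obtain B where B: "B \<in> carrier_mat (Suc n) (Suc n)"
    "loaded_gram c (Suc n) H * B = 1\<^sub>m (Suc n)" "B * loaded_gram c (Suc n) H = 1\<^sub>m (Suc n)"
    using loaded_gram_inverse[OF H c] by metis
  obtain b where b: "B $$ (0, 0) = complex_of_real b" "0 < b" "b \<le> 1"
    using loaded_gram_inverse_diag[OF H c B(1,2), of 0] by auto
  obtain q where q: "q \<ge> 1" "det (loaded_gram c n (delete_col H 0)) = complex_of_real q"
    using Suc.IH[OF delete_col_carrier[OF H, of 0, simplified]] by auto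
  have "det (loaded_gram c (Suc n) H) * B $$ (0, 0) = det (loaded_gram c n (delete_col H 0))"
    using det_mult_inverse_diag[OF loaded_gram_carrier[OF H] B(1,3), of 0] mat_delete_loaded_gram[OF H, of 0 c]
    by simp
  then have "det (loaded_gram c (Suc n) H) = complex_of_real (q / b)"
    using b q by (simp add: field_simps)
  moreover have "q / b \<ge> 1" using b q by (simp add: le_divide_eq)
  ultimately show ?case by blast
qed

lemma det_one_plus_mult_commute:
  fixes X :: "'a :: idom mat"
  assumes X: "X \<in> carrier_mat m n" and Y: "Y \<in> carrier_mat n m"
  shows "det (1\<^sub>m m + X * Y) = det (1\<^sub>m n + Y * X)"
proof -
  have XY: "X * Y \<in> carrier_mat m m" and YX: "Y * X \<in> carrier_mat n n" using X Y by auto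
  define L where "L = four_block_mat (1\<^sub>m m) (0\<^sub>m m n) Y (1\<^sub>m n)"
  define U where "U = four_block_mat (1\<^sub>m m) (- X) (0\<^sub>m n m) (1\<^sub>m n + Y * X)"
  define U' where "U' = four_block_mat (1\<^sub>m m + X * Y) (- X) (0\<^sub>m n m) (1\<^sub>m n)"
  have L: "L \<in> carrier_mat (m + n) (m + n)" unfolding L_def using Y by auto
  have U: "U \<in> carrier_mat (m + n) (m + n)" unfolding U_def using X YX by auto
  have U': "U' \<in> carrier_mat (m + n) (m + n)" unfolding U'_def using X XY by auto
  \<comment> \<open>both products equal \<open>[[1, -X], [Y, 1]]\<close>\<close>
  have "L * U = four_block_mat (1\<^sub>m m) (- X) Y (1\<^sub>m n)"
    unfolding L_def U_def using X Y YX
    by (subst mult_four_block_mat[where ?nr1.0 = m and ?n1.0 = m and ?n2.0 = n and ?nr2.0 = n and ?nc1.0 = m and ?nc2.0 = n]) (auto intro!: cong_four_block_mat eq_matI)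
  also have "\<dots> = U' * L"
    unfolding L_def U'_def using X Y XY
    by (subst mult_four_block_mat[where ?nr1.0 = m and ?n1.0 = m and ?n2.0 = n and ?nr2.0 = n and ?nc1.0 = m and ?nc2.0 = n]) (auto intro!: cong_four_block_mat eq_matI)
  finally have "det L * det U = det U' * det L"
    by (metis det_mult[OF L U] det_mult[OF U' L])
  moreover have "det L = 1" unfolding L_def
    by (subst det_four_block_mat_upper_right_zero[of _ m _ n]) (use Y in auto)
  moreover have "det U = det (1\<^sub>m n + Y * X)" unfolding U_def
    by (subst det_four_block_mat_lower_left_zero[of _ m _ n]) (use X YX in auto)
  moreover have "det U' = det (1\<^sub>m m + X * Y)" unfolding U'_def
    by (subst det_four_block_mat_lower_left_zero[of _ m _ n]) (use X XY in auto)
  ultimately show ?thesis by simp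
qed

lemma det_one_plus_outer_eq_loaded_gram:
  assumes H: "H \<in> carrier_mat m n"
  shows "det (1\<^sub>m m + complex_of_real c \<cdot>\<^sub>m (H * herm H)) = det (loaded_gram c n H)"
proof -
  have hH: "herm H \<in> carrier_mat n m" using H by simp
  have "1\<^sub>m m + complex_of_real c \<cdot>\<^sub>m (H * herm H) = 1\<^sub>m m + (complex_of_real c \<cdot>\<^sub>m H) * herm H"
    using mult_smult_assoc_mat[OF H hH] by simp
  also have "det \<dots> = det (1\<^sub>m n + herm H * (complex_of_real c \<cdot>\<^sub>m H))"
    by (rule det_one_plus_mult_commute) (use H hH in auto)
  also have "herm H * (complex_of_real c \<cdot>\<^sub>m H) = complex_of_real c \<cdot>\<^sub>m (herm H * H)"
    using mult_smult_distrib[OF hH H] by simp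
  finally show ?thesis unfolding loaded_gram_def .
qed

lemma det_one_plus_outer_ge_1:
  assumes "H \<in> carrier_mat m n" and "c \<ge> 0"
  shows "\<exists>q\<ge>1. det (1\<^sub>m m + complex_of_real c \<cdot>\<^sub>m (H * herm H)) = complex_of_real q"
  unfolding det_one_plus_outer_eq_loaded_gram[OF assms(1)] using det_loaded_gram_ge_1[OF assms] .

lemma log_one_plus_sinr_mmse:
  assumes H: "H \<in> carrier_mat m n" and snr: "snr > 0" and i: "i < n"
  shows "log 2 (1 + sinr_mmse snr m n H i) =
    log 2 (Re (det (1\<^sub>m m + complex_of_real (snr / real n) \<cdot>\<^sub>m (H * herm H)))) -
    log 2 (Re (det (1\<^sub>m m + complex_of_real (snr / real n) \<cdot>\<^sub>m (delete_col H i * herm (delete_col H i)))))"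
proof -
  define c where "c = snr / real n"
  have c: "c \<ge> 0" using snr unfolding c_def by simp
  have H': "delete_col H i \<in> carrier_mat m (n - 1)" using delete_col_carrier[OF H] .
  obtain B where B: "mat_inverse (loaded_gram c n H) = Some B" "B \<in> carrier_mat n n"
    "loaded_gram c n H * B = 1\<^sub>m n" "B * loaded_gram c n H = 1\<^sub>m n"
    using loaded_gram_inverse[OF H c] by metis
  obtain b where b: "B $$ (i, i) = complex_of_real b" "0 < b"
    using loaded_gram_inverse_diag[OF H c B(2,3) i] by auto
  obtain q where q: "q \<ge> 1" "det (loaded_gram c n H) = complex_of_real q"
    using det_loaded_gram_ge_1[OF H c] by auto
  obtain q' where q': "q' \<ge> 1" "det (loaded_gram c (n - 1) (delete_col H i)) = complex_of_real q'"
    using det_loaded_gram_ge_1[OF H' c] by auto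
  have "det (loaded_gram c n H) * B $$ (i, i) = det (loaded_gram c (n - 1) (delete_col H i))"
    using det_mult_inverse_diag[OF loaded_gram_carrier[OF H] B(2,4) i] mat_delete_loaded_gram[OF H i]
    by simp
  then have qb: "q' = q * b" using q q' b by (metis of_real_eq_iff of_real_mult)
  have "sinr_mmse snr m n H i = 1 / b - 1"
    unfolding sinr_mmse_def using B(1) b unfolding loaded_gram_def c_def by simp
  then have "1 + sinr_mmse snr m n H i = q / q'" unfolding qb using q by simp
  then have "log 2 (1 + sinr_mmse snr m n H i) = log 2 q - log 2 q'"
    using q q' by (simp add: log_divide)
  then show ?thesis
    unfolding c_def[symmetric] det_one_plus_outer_eq_loaded_gram[OF H]
      det_one_plus_outer_eq_loaded_gram[OF H'] q(2) q'(2) by simp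
qed

section \<open>Integrability of the log-determinant\<close>

lemma norm_det_le:
  fixes A :: "complex mat"
  assumes A: "A \<in> carrier_mat k k" and M: "\<And>a b. a < k \<Longrightarrow> b < k \<Longrightarrow> norm (A $$ (a, b)) \<le> M"
  shows "norm (det A) \<le> fact k * M ^ k"
proof -
  have "norm (det A) \<le> (\<Sum>p\<in>{p. p permutes {0..<k}}. norm (of_int (sign p) * (\<Prod>i=0..<k. A $$ (i, p i))))"
    unfolding det_def'[OF A] by (rule norm_sum)
  also have "\<dots> \<le> (\<Sum>p\<in>{p. p permutes {0..<k}}. M ^ k)"
  proof (rule sum_mono)
    fix p assume p: "p \<in> {p. p permutes {0..<k}}"
    have "norm (of_int (sign p) * (\<Prod>i=0..<k. A $$ (i, p i))) = (\<Prod>i=0..<k. norm (A $$ (i, p i)))"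
      by (simp add: norm_mult prod_norm sign_def)
    also have "\<dots> \<le> (\<Prod>i=0..<k. M)"
      by (rule prod_mono) (use p M permutes_in_image in auto)
    finally show "norm (of_int (sign p) * (\<Prod>i=0..<k. A $$ (i, p i))) \<le> M ^ k" by simp
  qed
  also have "\<dots> = fact k * M ^ k"
    using card_permutations[of "{0..<k}" k] by simp
  finally show ?thesis .
qed

lemma borel_measurable_det:
  fixes A :: "'b \<Rightarrow> complex mat"
  assumes A: "\<And>\<omega>. A \<omega> \<in> carrier_mat k k"
    and M: "\<And>a b. a < k \<Longrightarrow> b < k \<Longrightarrow> (\<lambda>\<omega>. A \<omega> $$ (a, b)) \<in> borel_measurable N"
  shows "(\<lambda>\<omega>. det (A \<omega>)) \<in> borel_measurable N"
proof -
  have "(\<lambda>\<omega>. det (A \<omega>)) =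
      (\<lambda>\<omega>. \<Sum>p\<in>{p. p permutes {0..<k}}. of_int (sign p) * (\<Prod>i=0..<k. A \<omega> $$ (i, p i)))"
    using det_def'[OF A] by auto
  also have "\<dots> \<in> borel_measurable N"
  proof (intro borel_measurable_sum borel_measurable_times borel_measurable_prod)
    fix p i assume "p \<in> {p. p permutes {0..<k}}" "i \<in> {0..<k}"
    then show "(\<lambda>\<omega>. A \<omega> $$ (i, p i)) \<in> borel_measurable N"
      using M permutes_in_image by fastforce
  qed simp
  finally show ?thesis .
qed

lemma borel_measurable_cnj: "cnj \<in> borel_measurable borel"
  by (intro borel_measurable_continuous_onI linear_continuous_on bounded_linear_cnj)

lemma to_mat_carrier [simp]: "to_mat m n \<omega> \<in> carrier_mat m n"
  unfolding to_mat_def by simp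

lemma one_plus_outer_carrier:
  "1\<^sub>m m + complex_of_real c \<cdot>\<^sub>m (to_mat m n \<omega> * herm (to_mat m n \<omega>)) \<in> carrier_mat m m"
  by (intro add_carrier_mat one_carrier_mat smult_carrier_mat
      mult_carrier_mat[OF to_mat_carrier herm_carrier_mat[OF to_mat_carrier]])

lemma one_plus_outer_index:
  assumes "a < m" "b < m"
  shows "(1\<^sub>m m + complex_of_real c \<cdot>\<^sub>m (to_mat m n \<omega> * herm (to_mat m n \<omega>))) $$ (a, b) =
    (if a = b then 1 else 0) + complex_of_real c * (\<Sum>k=0..<n. \<omega> (a, k) * cnj (\<omega> (b, k)))"
  using assms unfolding to_mat_def by (auto simp: scalar_prod_def)

definition log_det_rate :: "real \<Rightarrow> nat \<Rightarrow> nat \<Rightarrow> ((nat \<times> nat) \<Rightarrow> complex) \<Rightarrow> real" where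
  "log_det_rate c m n \<omega> =
     log 2 (Re (det (1\<^sub>m m + complex_of_real c \<cdot>\<^sub>m (to_mat m n \<omega> * herm (to_mat m n \<omega>)))))"

lemma I_opt_eq_integral_log_det_rate:
  "I_opt D snr m n = (\<integral>\<omega>. log_det_rate (snr / real n) m n \<omega> \<partial>rand_mat_space D m n)"
  unfolding I_opt_def log_det_rate_def ..

lemma measurable_rand_mat_space_entry:
  assumes "sets D = sets borel" and "j \<in> {0..<m} \<times> {0..<n}"
  shows "(\<lambda>\<omega>. \<omega> j) \<in> borel_measurable (rand_mat_space D m n)"
  using measurable_component_singleton[OF assms(2), of "\<lambda>_. D"] measurable_cong_sets[OF refl assms(1)]
  unfolding rand_mat_space_def by blast

lemma borel_measurable_log_det_rate:
  assumes D: "sets D = sets borel"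
  shows "log_det_rate c m n \<in> borel_measurable (rand_mat_space D m n)"
proof -
  note entry = measurable_rand_mat_space_entry[OF D]
  have "(\<lambda>\<omega>. det (1\<^sub>m m + complex_of_real c \<cdot>\<^sub>m (to_mat m n \<omega> * herm (to_mat m n \<omega>))))
      \<in> borel_measurable (rand_mat_space D m n)"
  proof (rule borel_measurable_det[OF one_plus_outer_carrier])
    fix a b assume ab: "a < m" "b < m"
    show "(\<lambda>\<omega>. (1\<^sub>m m + complex_of_real c \<cdot>\<^sub>m (to_mat m n \<omega> * herm (to_mat m n \<omega>))) $$ (a, b))
        \<in> borel_measurable (rand_mat_space D m n)"
      unfolding one_plus_outer_index[OF ab]
      by (intro borel_measurable_add borel_measurable_times borel_measurable_sum borel_measurable_const
          measurable_compose[OF entry borel_measurable_cnj] entry) (use ab in auto)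
  qed
  then show ?thesis unfolding log_det_rate_def by measurable
qed

definition entries_sq :: "nat \<Rightarrow> nat \<Rightarrow> ((nat \<times> nat) \<Rightarrow> complex) \<Rightarrow> real" where
  "entries_sq m n \<omega> = (\<Sum>a=0..<m. \<Sum>k=0..<n. (cmod (\<omega> (a, k)))\<^sup>2)"

lemma entries_sq_nonneg: "entries_sq m n \<omega> \<ge> 0"
  unfolding entries_sq_def by (intro sum_nonneg) auto

lemma row_sq_le_entries_sq: "a < m \<Longrightarrow> (\<Sum>k=0..<n. (cmod (\<omega> (a, k)))\<^sup>2) \<le> entries_sq m n \<omega>"
  unfolding entries_sq_def by (rule member_le_sum[of a]) (auto intro: sum_nonneg)

lemma norm_one_plus_outer_index_le:
  assumes ab: "a < m" "b < m" and c: "c \<ge> 0"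
  shows "norm ((1\<^sub>m m + complex_of_real c \<cdot>\<^sub>m (to_mat m n \<omega> * herm (to_mat m n \<omega>))) $$ (a, b))
    \<le> 1 + c * entries_sq m n \<omega>"
proof -
  let ?x = "\<lambda>k. cmod (\<omega> (a, k))" and ?y = "\<lambda>k. cmod (\<omega> (b, k))"
  have "2 * (\<Sum>k=0..<n. ?x k * ?y k) \<le> (\<Sum>k=0..<n. (?x k)\<^sup>2) + (\<Sum>k=0..<n. (?y k)\<^sup>2)"
    unfolding sum_distrib_left sum.distrib[symmetric]
    by (rule sum_mono) (metis sum_squares_bound mult.assoc)
  also have "\<dots> \<le> 2 * entries_sq m n \<omega>"
    using row_sq_le_entries_sq[OF ab(1), where n = n and \<omega> = \<omega>]
      row_sq_le_entries_sq[OF ab(2), where n = n and \<omega> = \<omega>] by simp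
  finally have xy: "(\<Sum>k=0..<n. ?x k * ?y k) \<le> entries_sq m n \<omega>" by simp
  have "norm (\<Sum>k=0..<n. \<omega> (a, k) * cnj (\<omega> (b, k))) \<le> (\<Sum>k=0..<n. ?x k * ?y k)"
    using norm_sum[of "\<lambda>k. \<omega> (a, k) * cnj (\<omega> (b, k))"] by (simp add: norm_mult)
  then have "norm (complex_of_real c * (\<Sum>k=0..<n. \<omega> (a, k) * cnj (\<omega> (b, k)))) \<le> c * entries_sq m n \<omega>"
    using xy c by (simp add: norm_mult mult_left_mono)
  moreover have "norm (if a = b then 1 else 0 :: complex) \<le> 1" by simp
  ultimately show ?thesis
    unfolding one_plus_outer_index[OF ab] by (smt (verit) norm_triangle_ineq)
qed

lemma log_det_rate_bounds:
  assumes c: "c \<ge> 0"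
  shows "0 \<le> log_det_rate c m n \<omega>"
    and "log_det_rate c m n \<omega> \<le> log 2 (fact m) + real m * c / ln 2 * entries_sq m n \<omega>"
proof -
  let ?A = "1\<^sub>m m + complex_of_real c \<cdot>\<^sub>m (to_mat m n \<omega> * herm (to_mat m n \<omega>))"
  obtain q where q: "q \<ge> 1" "det ?A = complex_of_real q"
    using det_one_plus_outer_ge_1[OF to_mat_carrier[of m n \<omega>] c] by auto
  show "0 \<le> log_det_rate c m n \<omega>" unfolding log_det_rate_def q(2) using q(1) by simp
  define M where "M = 1 + c * entries_sq m n \<omega>"
  have M: "M \<ge> 1" unfolding M_def using c entries_sq_nonneg[of m n \<omega>] by simp
  have "q \<le> fact m * M ^ m"
    using norm_det_le[OF one_plus_outer_carrier norm_one_plus_outer_index_le[OF _ _ c], of m n \<omega>] q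
    unfolding M_def by simp
  then have "log_det_rate c m n \<omega> \<le> log 2 (fact m * M ^ m)"
    unfolding log_det_rate_def q(2) using q(1) by simp
  also have "\<dots> = log 2 (fact m) + real m * log 2 M"
    using M by (simp add: log_mult log_nat_power)
  also have "log 2 M \<le> c / ln 2 * entries_sq m n \<omega>"
    using ln_add_one_self_le_self[of "c * entries_sq m n \<omega>"] c entries_sq_nonneg[of m n \<omega>]
    unfolding M_def log_def by (simp add: divide_right_mono)
  finally show "log_det_rate c m n \<omega> \<le> log 2 (fact m) + real m * c / ln 2 * entries_sq m n \<omega>"
    by (simp add: mult_left_mono)
qed

lemma prob_space_rand_mat_space: "prob_space D \<Longrightarrow> prob_space (rand_mat_space D m n)"
  unfolding rand_mat_space_def by (intro prob_space_PiM) auto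

lemma integrable_entries_sq:
  assumes D: "prob_space D" "sets D = sets borel" "integrable D (\<lambda>z. (cmod z)\<^sup>2)"
  shows "integrable (rand_mat_space D m n) (entries_sq m n)"
  unfolding entries_sq_def
proof (intro Bochner_Integration.integrable_sum)
  fix a k assume "a \<in> {0..<m}" "k \<in> {0..<n}"
  then have j: "(a, k) \<in> {0..<m} \<times> {0..<n}" by simp
  have entry: "(\<lambda>\<omega>. \<omega> (a, k)) \<in> measurable (rand_mat_space D m n) D"
    unfolding rand_mat_space_def using measurable_component_singleton[OF j, of "\<lambda>_. D"] by simp
  have "distr (rand_mat_space D m n) D (\<lambda>\<omega>. \<omega> (a, k)) = D"
    unfolding rand_mat_space_def using distr_PiM_component[OF _ j, of "\<lambda>_. D"] D(1) by simp
  moreover have "(\<lambda>z. (cmod z)\<^sup>2) \<in> borel_measurable D"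
    by (subst measurable_cong_sets[OF D(2) refl]) measurable
  ultimately show "integrable (rand_mat_space D m n) (\<lambda>\<omega>. (cmod (\<omega> (a, k)))\<^sup>2)"
    using integrable_distr_eq[OF entry, of "\<lambda>z. (cmod z)\<^sup>2"] D(3) by simp
qed

lemma integrable_log_det_rate:
  assumes D: "prob_space D" "sets D = sets borel" "integrable D (\<lambda>z. (cmod z)\<^sup>2)" and c: "c \<ge> 0"
  shows "integrable (rand_mat_space D m n) (log_det_rate c m n)"
proof (rule Bochner_Integration.integrable_bound)
  interpret prob_space "rand_mat_space D m n" using prob_space_rand_mat_space[OF D(1)] .
  show "integrable (rand_mat_space D m n) (\<lambda>\<omega>. log 2 (fact m) + real m * c / ln 2 * entries_sq m n \<omega>)"
    using integrable_entries_sq[OF D] by simp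
  show "log_det_rate c m n \<in> borel_measurable (rand_mat_space D m n)"
    using D(2) by (rule borel_measurable_log_det_rate)
  show "AE \<omega> in rand_mat_space D m n.
      norm (log_det_rate c m n \<omega>) \<le> norm (log 2 (fact m) + real m * c / ln 2 * entries_sq m n \<omega>)"
    using log_det_rate_bounds[OF c] by (intro AE_I2) (smt (verit) real_norm_def)
qed

section \<open>Deleting a column of an i.i.d. matrix\<close>

definition skip_col :: "nat \<Rightarrow> nat \<times> nat \<Rightarrow> nat \<times> nat" where
  "skip_col i = (\<lambda>(r, k). (r, if k < i then k else Suc k))"

definition drop_col_sample ::
  "nat \<Rightarrow> nat \<Rightarrow> nat \<Rightarrow> ((nat \<times> nat) \<Rightarrow> complex) \<Rightarrow> ((nat \<times> nat) \<Rightarrow> complex)" where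
  "drop_col_sample m n i \<omega> = (\<lambda>j\<in>{0..<m} \<times> {0..<n - 1}. \<omega> (skip_col i j))"

lemma to_mat_drop_col_sample:
  "i < n \<Longrightarrow> to_mat m (n - 1) (drop_col_sample m n i \<omega>) = delete_col (to_mat m n \<omega>) i"
  by (rule eq_matI) (auto simp: to_mat_def delete_col_def drop_col_sample_def skip_col_def)

lemma measurable_drop_col_sample:
  "drop_col_sample m n i \<in> measurable (rand_mat_space D m n) (rand_mat_space D m (n - 1))"
  unfolding drop_col_sample_def rand_mat_space_def
  by (intro measurable_restrict measurable_component_singleton) (auto simp: skip_col_def)

lemma distr_drop_col_sample:
  assumes "prob_space D" and "i < n"
  shows "distr (rand_mat_space D m n) (rand_mat_space D m (n - 1)) (drop_col_sample m n i) =
    rand_mat_space D m (n - 1)"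
proof -
  have "inj_on (skip_col i) ({0..<m} \<times> {0..<n - 1})"
    unfolding skip_col_def inj_on_def by (auto split: if_splits)
  moreover have "skip_col i \<in> {0..<m} \<times> {0..<n - 1} \<rightarrow> {0..<m} \<times> {0..<n}"
    using assms(2) unfolding skip_col_def by auto
  ultimately show ?thesis
    unfolding drop_col_sample_def rand_mat_space_def
    using distr_PiM_reindex[of "{0..<m} \<times> {0..<n}" "\<lambda>_. D" "skip_col i"] assms(1) by simp
qed

lemma integral_log_det_rate_drop_col:
  assumes D: "prob_space D" "sets D = sets borel" "integrable D (\<lambda>z. (cmod z)\<^sup>2)"
    and i: "i < n" and c: "c \<ge> 0"
  shows "integrable (rand_mat_space D m n) (\<lambda>\<omega>. log_det_rate c m (n - 1) (drop_col_sample m n i \<omega>))"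
    and "(\<integral>\<omega>. log_det_rate c m (n - 1) (drop_col_sample m n i \<omega>) \<partial>rand_mat_space D m n) =
      (\<integral>\<omega>. log_det_rate c m (n - 1) \<omega> \<partial>rand_mat_space D m (n - 1))"
proof -
  note F = borel_measurable_log_det_rate[OF D(2), of c m "n - 1"]
  note law = distr_drop_col_sample[OF D(1) i, of m]
  show "integrable (rand_mat_space D m n) (\<lambda>\<omega>. log_det_rate c m (n - 1) (drop_col_sample m n i \<omega>))"
    using integrable_distr_eq[OF measurable_drop_col_sample[of m n i D] F] law
      integrable_log_det_rate[OF D c, of m "n - 1"] by simp
  show "(\<integral>\<omega>. log_det_rate c m (n - 1) (drop_col_sample m n i \<omega>) \<partial>rand_mat_space D m n) =
      (\<integral>\<omega>. log_det_rate c m (n - 1) \<omega> \<partial>rand_mat_space D m (n - 1))"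
    using integral_distr[OF measurable_drop_col_sample[of m n i D] F] law by simp
qed

lemma I_opt_one_fewer_column:
  assumes "n \<ge> 1"
  shows "I_opt D ((real n - 1) / real n * snr) m (n - 1) =
    (\<integral>\<omega>. log_det_rate (snr / real n) m (n - 1) \<omega> \<partial>rand_mat_space D m (n - 1))"
proof (cases "n = 1")
  case True
  \<comment> \<open>the reduced load is \<open>x / 0 = 0\<close>, harmless since \<open>HH\<^sup>\<dagger> = 0\<close> for an empty \<open>H\<close>\<close>
  have "to_mat m 0 \<omega> * herm (to_mat m 0 \<omega>) = 0\<^sub>m m m" for \<omega>
    by (rule eq_matI) (auto simp: to_mat_def scalar_prod_def)
  then show ?thesis using True
    unfolding I_opt_eq_integral_log_det_rate log_det_rate_def by simp
next
  case False
  then have "(real n - 1) / real n * snr / real (n - 1) = snr / real n"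
    using assms by (simp add: of_nat_diff)
  then show ?thesis unfolding I_opt_eq_integral_log_det_rate by simp
qed

lemma integral_log_one_plus_sinr_mmse:
  assumes D: "prob_space D" "sets D = sets borel" "integrable D (\<lambda>z. (cmod z)\<^sup>2)"
    and snr: "snr > 0" and i: "i < n"
  shows "(\<integral>\<omega>. log 2 (1 + sinr_mmse snr m n (to_mat m n \<omega>) i) \<partial>rand_mat_space D m n) =
    I_opt D snr m n - I_opt D ((real n - 1) / real n * snr) m (n - 1)"
proof -
  define c where "c = snr / real n"
  have c: "c \<ge> 0" using snr unfolding c_def by simp
  have "(\<integral>\<omega>. log 2 (1 + sinr_mmse snr m n (to_mat m n \<omega>) i) \<partial>rand_mat_space D m n) =
      (\<integral>\<omega>. log_det_rate c m n \<omega> - log_det_rate c m (n - 1) (drop_col_sample m n i \<omega>) \<partial>rand_mat_space D m n)"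
    unfolding log_det_rate_def to_mat_drop_col_sample[OF i] c_def
    by (rule Bochner_Integration.integral_cong[OF refl log_one_plus_sinr_mmse[OF to_mat_carrier snr i]])
  also have "\<dots> = (\<integral>\<omega>. log_det_rate c m n \<omega> \<partial>rand_mat_space D m n) -
      (\<integral>\<omega>. log_det_rate c m (n - 1) (drop_col_sample m n i \<omega>) \<partial>rand_mat_space D m n)"
    using integrable_log_det_rate[OF D c] integral_log_det_rate_drop_col(1)[OF D i c]
    by (rule Bochner_Integration.integral_diff)
  also have "\<dots> = I_opt D snr m n - I_opt D ((real n - 1) / real n * snr) m (n - 1)"
    using integral_log_det_rate_drop_col(2)[OF D i c] I_opt_one_fewer_column[of n D snr m]
      I_opt_eq_integral_log_det_rate[of D snr m n] i
    unfolding c_def by simp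
  finally show ?thesis .
qed

theorem corollary1:
  fixes D :: "complex measure" and snr :: real and Nr Nt :: nat
  assumes "prob_space D"
    and "sets D = sets borel"
    and "integrable D (\<lambda>z. (cmod z)\<^sup>2)"
    and "(\<integral>z. (cmod z)\<^sup>2 \<partial>D) = 1"
    and "Nr \<ge> 1" and "Nt \<ge> 1"
    and "snr > 0"
  shows "I_mmse D snr Nr Nt =
           real Nt * (I_opt D snr Nr Nt - I_opt D ((real Nt - 1) / real Nt * snr) Nr (Nt - 1))"
proof -
  have "I_mmse D snr Nr Nt =
      (\<Sum>i<Nt. I_opt D snr Nr Nt - I_opt D ((real Nt - 1) / real Nt * snr) Nr (Nt - 1))"
    unfolding I_mmse_def
    by (rule sum.cong) (simp_all add: integral_log_one_plus_sinr_mmse[OF assms(1-3,7)])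
  then show ?thesis by simp
qed

end
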